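(* Let $\mathbf{D}$ be a locally small dagger kernel category and $X$ an object. The set $\mathrm{End}(X)=\mathbf{D}(X,X)$, with composition as multiplication, $\mathrm{id}_X$ as unit, $\dagger$ as involution and $[s]=\ker(s)\circ\ker(s)^\dagger$, is a Foulis semigroup; in particular for $s,t\in\mathrm{End}(X)$, $s\circ t=0$ iff $t=[s]\circ r$ for some $r\in\mathrm{End}(X)$. Moreover, sending $f:X\to Y$ to the function $\mathrm{End}(X)\to\mathrm{End}(Y)$, $s\mapsto f\circ s\circ f^\dagger$, makes $X\mapsto\mathrm{End}(X)$ a functor $\mathbf{D}\to\mathbf{Sets}$.
   Context: A dagger category is a category with a contravariant functor $\dagger$ that is the identity on objects and satisfies $f^{\dagger\dagger}=f$; a dagger mono satisfies $k^\dagger\circ k=\mathrm{id}$. A dagger kernel category is a dagger category with a zero object (giving zero morphisms $0$) in which every morphism $s$ has a kernel $\ker(s)$ that is a dagger mono. A Foulis semigroup is a monoid $(S,\cdot,1)$ with maps $(-)^\dagger:S\to S$ and $[-]:S\to S$ such that: (1) $1^\dagger=1$, $(s\cdot t)^\dagger=t^\dagger\cdot s^\dagger$, $s^{\dagger\dagger}=s$; (2) $[s]\cdot[s]=[s]=[s]^\dagger$; (3) $0:=[1]$ satisfies $0\cdot s=0=s\cdot 0$ for all $s$; (4) for all $s,x$: $s\cdot x=0$ iff $x=[s]\cdot y$ for some $y\in S$. *)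

theory Defs
  imports Main "HOL-Library.FuncSet"
begin

text \<open>A (locally small) dagger category, presented by its object set, morphism set,
domain/codomain, identities, composition (Comp g f = g o f) and the dagger.
Hom-sets are sets of elements of the type 'm, so local smallness is automatic.\<close>

record ('o, 'm) dcat =
  Obj  :: "'o set"
  Mor  :: "'m set"
  Dom  :: "'m \<Rightarrow> 'o"
  Cod  :: "'m \<Rightarrow> 'o"
  Id   :: "'o \<Rightarrow> 'm"
  Comp :: "'m \<Rightarrow> 'm \<Rightarrow> 'm"
  Dag  :: "'m \<Rightarrow> 'm"

definition Hom :: "('o, 'm) dcat \<Rightarrow> 'o \<Rightarrow> 'o \<Rightarrow> 'm set" where
  "Hom C X Y = {f \<in> Mor C. Dom C f = X \<and> Cod C f = Y}"

definition End :: "('o, 'm) dcat \<Rightarrow> 'o \<Rightarrow> 'm set" where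
  "End C X = Hom C X X"

definition category :: "('o, 'm) dcat \<Rightarrow> bool" where
  "category C \<longleftrightarrow>
     (\<forall>f \<in> Mor C. Dom C f \<in> Obj C \<and> Cod C f \<in> Obj C)
   \<and> (\<forall>X \<in> Obj C. Id C X \<in> Hom C X X)
   \<and> (\<forall>f \<in> Mor C. \<forall>g \<in> Mor C. Cod C f = Dom C g \<longrightarrow>
          Comp C g f \<in> Hom C (Dom C f) (Cod C g))
   \<and> (\<forall>f \<in> Mor C. Comp C f (Id C (Dom C f)) = f \<and> Comp C (Id C (Cod C f)) f = f)
   \<and> (\<forall>f \<in> Mor C. \<forall>g \<in> Mor C. \<forall>h \<in> Mor C.
          Cod C f = Dom C g \<and> Cod C g = Dom C h \<longrightarrow>
          Comp C h (Comp C g f) = Comp C (Comp C h g) f)"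

definition dagger_category :: "('o, 'm) dcat \<Rightarrow> bool" where
  "dagger_category C \<longleftrightarrow> category C
   \<and> (\<forall>f \<in> Mor C. Dag C f \<in> Hom C (Cod C f) (Dom C f))
   \<and> (\<forall>X \<in> Obj C. Dag C (Id C X) = Id C X)
   \<and> (\<forall>f \<in> Mor C. \<forall>g \<in> Mor C. Cod C f = Dom C g \<longrightarrow>
          Dag C (Comp C g f) = Comp C (Dag C f) (Dag C g))
   \<and> (\<forall>f \<in> Mor C. Dag C (Dag C f) = f)"

definition dagger_mono :: "('o, 'm) dcat \<Rightarrow> 'm \<Rightarrow> bool" where
  "dagger_mono C k \<longleftrightarrow> k \<in> Mor C \<and> Comp C (Dag C k) k = Id C (Dom C k)"

definition zero_obj :: "('o, 'm) dcat \<Rightarrow> 'o \<Rightarrow> bool" where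
  "zero_obj C z \<longleftrightarrow> z \<in> Obj C \<and>
     (\<forall>X \<in> Obj C. (\<exists>!f. f \<in> Hom C X z) \<and> (\<exists>!f. f \<in> Hom C z X))"

definition zero_mor :: "('o, 'm) dcat \<Rightarrow> 'o \<Rightarrow> 'o \<Rightarrow> 'm" where
  "zero_mor C X Y = (let z = (SOME z. zero_obj C z) in
      Comp C (THE f. f \<in> Hom C z Y) (THE f. f \<in> Hom C X z))"

definition is_kernel :: "('o, 'm) dcat \<Rightarrow> 'm \<Rightarrow> 'm \<Rightarrow> bool" where
  "is_kernel C s k \<longleftrightarrow> k \<in> Mor C \<and> Cod C k = Dom C s
   \<and> Comp C s k = zero_mor C (Dom C k) (Cod C s)
   \<and> (\<forall>W \<in> Obj C. \<forall>f \<in> Hom C W (Dom C s).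
         Comp C s f = zero_mor C W (Cod C s) \<longrightarrow>
         (\<exists>!g. g \<in> Hom C W (Dom C k) \<and> Comp C k g = f))"

definition dagger_kernel_category :: "('o, 'm) dcat \<Rightarrow> bool" where
  "dagger_kernel_category C \<longleftrightarrow> dagger_category C
   \<and> (\<exists>z. zero_obj C z)
   \<and> (\<forall>s \<in> Mor C. \<exists>k. is_kernel C s k \<and> dagger_mono C k)"

definition foulis_semigroup ::
  "'a set \<Rightarrow> ('a \<Rightarrow> 'a \<Rightarrow> 'a) \<Rightarrow> 'a \<Rightarrow> ('a \<Rightarrow> 'a) \<Rightarrow> ('a \<Rightarrow> 'a) \<Rightarrow> bool" where
  "foulis_semigroup S mult one dag br \<longleftrightarrow>
     (\<forall>s \<in> S. \<forall>t \<in> S. mult s t \<in> S) \<and> one \<in> S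
   \<and> (\<forall>s \<in> S. dag s \<in> S) \<and> (\<forall>s \<in> S. br s \<in> S)
   \<and> (\<forall>s \<in> S. \<forall>t \<in> S. \<forall>u \<in> S. mult (mult s t) u = mult s (mult t u))
   \<and> (\<forall>s \<in> S. mult one s = s \<and> mult s one = s)
   \<and> dag one = one
   \<and> (\<forall>s \<in> S. \<forall>t \<in> S. dag (mult s t) = mult (dag t) (dag s))
   \<and> (\<forall>s \<in> S. dag (dag s) = s)
   \<and> (\<forall>s \<in> S. mult (br s) (br s) = br s \<and> br s = dag (br s))
   \<and> (\<forall>s \<in> S. mult (br one) s = br one \<and> mult s (br one) = br one)
   \<and> (\<forall>s \<in> S. \<forall>x \<in> S. mult s x = br one \<longleftrightarrow> (\<exists>y \<in> S. x = mult (br s) y))"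

definition End_map :: "('o, 'm) dcat \<Rightarrow> 'm \<Rightarrow> 'm \<Rightarrow> 'm" where
  "End_map C f = (\<lambda>s \<in> End C (Dom C f). Comp C f (Comp C s (Dag C f)))"

end

theory Submission
  imports Defs
begin

section \<open>Category and dagger laws on hom-sets\<close>

lemma mor_hom: "f \<in> Mor C \<Longrightarrow> f \<in> Hom C (Dom C f) (Cod C f)"
  by (simp add: Hom_def)

lemma hom_dom: "f \<in> Hom C A B \<Longrightarrow> Dom C f = A"
  by (simp add: Hom_def)

lemma comp_hom: "category C \<Longrightarrow> f \<in> Hom C A B \<Longrightarrow> g \<in> Hom C B D \<Longrightarrow> Comp C g f \<in> Hom C A D"
  unfolding category_def Hom_def by auto

lemma id_hom: "category C \<Longrightarrow> A \<in> Obj C \<Longrightarrow> Id C A \<in> Hom C A A"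
  unfolding category_def by auto

lemma id_left: "category C \<Longrightarrow> f \<in> Hom C A B \<Longrightarrow> Comp C (Id C B) f = f"
  unfolding category_def Hom_def by auto

lemma id_right: "category C \<Longrightarrow> f \<in> Hom C A B \<Longrightarrow> Comp C f (Id C A) = f"
  unfolding category_def Hom_def by auto

lemma comp_assoc: "category C \<Longrightarrow> f \<in> Hom C A B \<Longrightarrow> g \<in> Hom C B D \<Longrightarrow> h \<in> Hom C D E
   \<Longrightarrow> Comp C h (Comp C g f) = Comp C (Comp C h g) f"
  unfolding category_def Hom_def by auto

lemma hom_objs: "category C \<Longrightarrow> f \<in> Hom C A B \<Longrightarrow> A \<in> Obj C \<and> B \<in> Obj C"
  unfolding category_def Hom_def by auto

lemma dagger_category_category: "dagger_category C \<Longrightarrow> category C"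
  unfolding dagger_category_def by auto

lemma dag_hom: "dagger_category C \<Longrightarrow> f \<in> Hom C A B \<Longrightarrow> Dag C f \<in> Hom C B A"
  unfolding dagger_category_def Hom_def by auto

lemma dag_comp: "dagger_category C \<Longrightarrow> f \<in> Hom C A B \<Longrightarrow> g \<in> Hom C B D \<Longrightarrow>
   Dag C (Comp C g f) = Comp C (Dag C f) (Dag C g)"
  unfolding dagger_category_def Hom_def by auto

lemma dag_dag: "dagger_category C \<Longrightarrow> f \<in> Hom C A B \<Longrightarrow> Dag C (Dag C f) = f"
  unfolding dagger_category_def Hom_def by auto

lemma dag_id: "dagger_category C \<Longrightarrow> A \<in> Obj C \<Longrightarrow> Dag C (Id C A) = Id C A"
  unfolding dagger_category_def by auto

section \<open>The functor X \<mapsto> End(X)\<close>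

lemma End_map_funcset:
  assumes dc: "dagger_category C" and f: "f \<in> Mor C"
  shows "End_map C f \<in> End C (Dom C f) \<rightarrow>\<^sub>E End C (Cod C f)"
proof -
  have cat: "category C" using dc by (rule dagger_category_category)
  have fh: "f \<in> Hom C (Dom C f) (Cod C f)" using f by (rule mor_hom)
  have "Comp C f (Comp C s (Dag C f)) \<in> End C (Cod C f)" if "s \<in> End C (Dom C f)" for s
    using that comp_hom[OF cat comp_hom[OF cat dag_hom[OF dc fh]] fh] by (simp add: End_def)
  then show ?thesis unfolding End_map_def by auto
qed

lemma End_map_id:
  assumes dc: "dagger_category C" and Y: "Y \<in> Obj C"
  shows "End_map C (Id C Y) = (\<lambda>s \<in> End C Y. s)"
proof -
  have cat: "category C" using dc by (rule dagger_category_category)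
  have dom_id: "Dom C (Id C Y) = Y" using hom_dom[OF id_hom[OF cat Y]] .
  have "Comp C (Id C Y) (Comp C s (Dag C (Id C Y))) = s" if "s \<in> Hom C Y Y" for s
    using dag_id[OF dc Y] id_right[OF cat that] id_left[OF cat that] by simp
  then show ?thesis unfolding End_map_def End_def dom_id by (intro restrict_ext) simp
qed

lemma End_map_comp:
  assumes dc: "dagger_category C" and f: "f \<in> Mor C" and g: "g \<in> Mor C"
    and fg: "Cod C f = Dom C g"
  shows "End_map C (Comp C g f) = compose (End C (Dom C f)) (End_map C g) (End_map C f)"
proof -
  let ?A = "Dom C f" and ?B = "Dom C g" and ?D = "Cod C g"
  have cat: "category C" using dc by (rule dagger_category_category)
  have fh: "f \<in> Hom C ?A ?B" using mor_hom[OF f] fg by simp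
  have gh: "g \<in> Hom C ?B ?D" using mor_hom[OF g] .
  have fd: "Dag C f \<in> Hom C ?B ?A" and gd: "Dag C g \<in> Hom C ?D ?B"
    using dag_hom[OF dc fh] dag_hom[OF dc gh] .
  have dom_gf: "Dom C (Comp C g f) = ?A" using hom_dom[OF comp_hom[OF cat fh gh]] .
  have conj: "Comp C (Comp C g f) (Comp C s (Dag C (Comp C g f)))
      = Comp C g (Comp C (Comp C f (Comp C s (Dag C f))) (Dag C g))"
    if s: "s \<in> Hom C ?A ?A" for s
  proof -
    have sf: "Comp C s (Dag C f) \<in> Hom C ?B ?A" using comp_hom[OF cat fd s] .
    have "Comp C (Comp C g f) (Comp C s (Dag C (Comp C g f)))
        = Comp C (Comp C g f) (Comp C (Comp C s (Dag C f)) (Dag C g))"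
      using dag_comp[OF dc fh gh] comp_assoc[OF cat gd fd s] by simp
    also have "\<dots> = Comp C g (Comp C f (Comp C (Comp C s (Dag C f)) (Dag C g)))"
      using comp_assoc[OF cat comp_hom[OF cat gd sf] fh gh] by simp
    also have "\<dots> = Comp C g (Comp C (Comp C f (Comp C s (Dag C f))) (Dag C g))"
      using comp_assoc[OF cat gd sf fh] by simp
    finally show ?thesis .
  qed
  have "Comp C f (Comp C s (Dag C f)) \<in> End C ?B" if "s \<in> Hom C ?A ?A" for s
    using comp_hom[OF cat comp_hom[OF cat fd that] fh] by (simp add: End_def)
  with conj show ?thesis
    unfolding compose_def End_map_def dom_gf by (intro restrict_ext) (simp add: End_def)
qed

section \<open>Zero morphisms\<close>

lemma zero_obj_unique_maps:
  assumes "zero_obj C z" "Y \<in> Obj C"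
  shows "(THE f. f \<in> Hom C z Y) \<in> Hom C z Y" "(THE f. f \<in> Hom C Y z) \<in> Hom C Y z"
    and "f \<in> Hom C z Y \<Longrightarrow> f = (THE f. f \<in> Hom C z Y)"
    and "g \<in> Hom C Y z \<Longrightarrow> g = (THE f. f \<in> Hom C Y z)"
proof -
  have from_z: "\<exists>!f. f \<in> Hom C z Y" and to_z: "\<exists>!f. f \<in> Hom C Y z"
    using assms unfolding zero_obj_def by blast+
  show "(THE f. f \<in> Hom C z Y) \<in> Hom C z Y" using theI'[OF from_z] .
  show "(THE f. f \<in> Hom C Y z) \<in> Hom C Y z" using theI'[OF to_z] .
  show "f \<in> Hom C z Y \<Longrightarrow> f = (THE f. f \<in> Hom C z Y)" using from_z the1_equality by metis
  show "g \<in> Hom C Y z \<Longrightarrow> g = (THE f. f \<in> Hom C Y z)" using to_z the1_equality by metis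
qed

locale zero_dagger_category =
  fixes C :: "('o, 'm) dcat"
  assumes dc: "dagger_category C" and has_zero: "\<exists>z. zero_obj C z"
begin

definition zero :: 'o where "zero = (SOME z. zero_obj C z)"

abbreviation from_zero :: "'o \<Rightarrow> 'm" where "from_zero Y \<equiv> THE f. f \<in> Hom C zero Y"
abbreviation to_zero :: "'o \<Rightarrow> 'm" where "to_zero Y \<equiv> THE f. f \<in> Hom C Y zero"

lemma cat: "category C"
  using dc by (rule dagger_category_category)

lemma zero_obj_zero: "zero_obj C zero"
  using has_zero unfolding zero_def by (rule someI_ex)

lemmas from_zero_hom = zero_obj_unique_maps(1)[OF zero_obj_zero]
   and to_zero_hom = zero_obj_unique_maps(2)[OF zero_obj_zero]
   and from_zero_unique = zero_obj_unique_maps(3)[OF zero_obj_zero]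
   and to_zero_unique = zero_obj_unique_maps(4)[OF zero_obj_zero]

lemma zero_mor_eq: "zero_mor C X Y = Comp C (from_zero Y) (to_zero X)"
  unfolding zero_mor_def zero_def Let_def by simp

lemma zero_mor_left:
  assumes X: "X \<in> Obj C" and f: "f \<in> Hom C Y Z"
  shows "Comp C f (zero_mor C X Y) = zero_mor C X Z"
proof -
  have Y: "Y \<in> Obj C" and Z: "Z \<in> Obj C" using hom_objs[OF cat f] by auto
  have "Comp C f (from_zero Y) = from_zero Z"
    using from_zero_unique[OF Z comp_hom[OF cat from_zero_hom[OF Y] f]] .
  then show ?thesis
    unfolding zero_mor_eq using comp_assoc[OF cat to_zero_hom[OF X] from_zero_hom[OF Y] f] by simp
qed

lemma zero_mor_right:
  assumes Z: "Z \<in> Obj C" and f: "f \<in> Hom C X Y"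
  shows "Comp C (zero_mor C Y Z) f = zero_mor C X Z"
proof -
  have X: "X \<in> Obj C" and Y: "Y \<in> Obj C" using hom_objs[OF cat f] by auto
  have "Comp C (to_zero Y) f = to_zero X"
    using to_zero_unique[OF X comp_hom[OF cat f to_zero_hom[OF Y]]] .
  then show ?thesis
    unfolding zero_mor_eq using comp_assoc[OF cat f to_zero_hom[OF Y] from_zero_hom[OF Z]] by simp
qed

end

section \<open>Kernel projections\<close>

locale chosen_dagger_kernels = zero_dagger_category C for C :: "('o, 'm) dcat" +
  fixes ker :: "'m \<Rightarrow> 'm"
  assumes ker_spec: "\<forall>s \<in> Mor C. is_kernel C s (ker s) \<and> dagger_mono C (ker s)"
begin

definition kernel_proj :: "'m \<Rightarrow> 'm" where
  "kernel_proj s = Comp C (ker s) (Dag C (ker s))"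

abbreviation ker_obj :: "'m \<Rightarrow> 'o" where "ker_obj s \<equiv> Dom C (ker s)"

lemma ker_facts:
  assumes s: "s \<in> Hom C X Y"
  shows "ker s \<in> Hom C (ker_obj s) X"
    and "Comp C s (ker s) = zero_mor C (ker_obj s) Y"
    and "Comp C (Dag C (ker s)) (ker s) = Id C (ker_obj s)"
    and "W \<in> Obj C \<Longrightarrow> t \<in> Hom C W X \<Longrightarrow> Comp C s t = zero_mor C W Y \<Longrightarrow>
        \<exists>g \<in> Hom C W (ker_obj s). Comp C (ker s) g = t"
proof -
  have sm: "s \<in> Mor C" "Dom C s = X" "Cod C s = Y" using s by (auto simp: Hom_def)
  have K: "is_kernel C s (ker s)" "dagger_mono C (ker s)" using ker_spec sm(1) by auto
  show "ker s \<in> Hom C (ker_obj s) X" "Comp C s (ker s) = zero_mor C (ker_obj s) Y"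
    using K(1) sm unfolding is_kernel_def Hom_def by simp_all
  show "Comp C (Dag C (ker s)) (ker s) = Id C (ker_obj s)"
    using K(2) unfolding dagger_mono_def by simp
  show "W \<in> Obj C \<Longrightarrow> t \<in> Hom C W X \<Longrightarrow> Comp C s t = zero_mor C W Y \<Longrightarrow>
        \<exists>g \<in> Hom C W (ker_obj s). Comp C (ker s) g = t"
    using K(1) sm unfolding is_kernel_def by blast
qed

lemma kernel_proj_hom: "s \<in> Hom C X Y \<Longrightarrow> kernel_proj s \<in> Hom C X X"
  unfolding kernel_proj_def using ker_facts(1) comp_hom[OF cat] dag_hom[OF dc] by blast

text \<open>[s] is an idempotent, because (ker s)^dagger o ker s = id.\<close>

lemma kernel_proj_idem:
  assumes s: "s \<in> Hom C X Y"
  shows "Comp C (kernel_proj s) (kernel_proj s) = kernel_proj s"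
proof -
  let ?k = "ker s"
  have k: "?k \<in> Hom C (ker_obj s) X" using ker_facts(1)[OF s] .
  have kd: "Dag C ?k \<in> Hom C X (ker_obj s)" using dag_hom[OF dc k] .
  have "Comp C (Comp C ?k (Dag C ?k)) (Comp C ?k (Dag C ?k))
      = Comp C ?k (Comp C (Comp C (Dag C ?k) ?k) (Dag C ?k))"
    using comp_assoc[OF cat comp_hom[OF cat kd k] kd k] comp_assoc[OF cat kd k kd] by simp
  also have "\<dots> = Comp C ?k (Dag C ?k)" using ker_facts(3)[OF s] id_left[OF cat kd] by simp
  finally show ?thesis unfolding kernel_proj_def .
qed

lemma kernel_proj_self_adjoint:
  assumes s: "s \<in> Hom C X Y"
  shows "Dag C (kernel_proj s) = kernel_proj s"
proof -
  have k: "ker s \<in> Hom C (ker_obj s) X" using ker_facts(1)[OF s] .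
  show ?thesis
    unfolding kernel_proj_def using dag_comp[OF dc dag_hom[OF dc k] k] dag_dag[OF dc k] by simp
qed

text \<open>The kernel of an identity is zero, hence [id] = 0.\<close>

lemma kernel_proj_id:
  assumes X: "X \<in> Obj C"
  shows "kernel_proj (Id C X) = zero_mor C X X"
proof -
  have i: "Id C X \<in> Hom C X X" using id_hom[OF cat X] .
  let ?k = "ker (Id C X)"
  have k: "?k \<in> Hom C (ker_obj (Id C X)) X" using ker_facts(1)[OF i] .
  have "?k = zero_mor C (ker_obj (Id C X)) X" using ker_facts(2)[OF i] id_left[OF cat k] by simp
  then show ?thesis unfolding kernel_proj_def using zero_mor_right[OF X dag_hom[OF dc k]] by simp
qed

lemma comp_kernel_proj:
  assumes s: "s \<in> Hom C X Y"
  shows "Comp C s (kernel_proj s) = zero_mor C X Y"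
proof -
  have k: "ker s \<in> Hom C (ker_obj s) X" using ker_facts(1)[OF s] .
  have Y: "Y \<in> Obj C" using hom_objs[OF cat s] by simp
  show ?thesis
    unfolding kernel_proj_def
    using comp_assoc[OF cat dag_hom[OF dc k] k s] ker_facts(2)[OF s] zero_mor_right[OF Y dag_hom[OF dc k]]
    by simp
qed

text \<open>Every morphism annihilated by s factors through ker s and is therefore fixed by [s].\<close>

lemma kernel_proj_fixes:
  assumes s: "s \<in> Hom C X Y" and t: "t \<in> Hom C W X" and st: "Comp C s t = zero_mor C W Y"
  shows "Comp C (kernel_proj s) t = t"
proof -
  let ?k = "ker s"
  have k: "?k \<in> Hom C (ker_obj s) X" using ker_facts(1)[OF s] .
  have kd: "Dag C ?k \<in> Hom C X (ker_obj s)" using dag_hom[OF dc k] .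
  obtain g where g: "g \<in> Hom C W (ker_obj s)" "Comp C ?k g = t"
    using ker_facts(4)[OF s _ t st] hom_objs[OF cat t] by blast
  have "Comp C (Comp C ?k (Dag C ?k)) t = Comp C ?k (Comp C (Comp C (Dag C ?k) ?k) g)"
    using g(2) comp_assoc[OF cat comp_hom[OF cat g(1) k] kd k] comp_assoc[OF cat g(1) k kd] by simp
  also have "\<dots> = t" using ker_facts(3)[OF s] id_left[OF cat g(1)] g(2) by simp
  finally show ?thesis unfolding kernel_proj_def .
qed

lemma comp_zero_iff_kernel_proj:
  assumes s: "s \<in> Hom C X Y" and t: "t \<in> Hom C W X"
  shows "Comp C s t = zero_mor C W Y \<longleftrightarrow> (\<exists>r \<in> Hom C W X. t = Comp C (kernel_proj s) r)"
proof
  assume "Comp C s t = zero_mor C W Y"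
  then show "\<exists>r \<in> Hom C W X. t = Comp C (kernel_proj s) r"
    using kernel_proj_fixes[OF s t] t by metis
next
  assume "\<exists>r \<in> Hom C W X. t = Comp C (kernel_proj s) r"
  then obtain r where r: "r \<in> Hom C W X" "t = Comp C (kernel_proj s) r" by blast
  have Y: "Y \<in> Obj C" using hom_objs[OF cat s] by simp
  show "Comp C s t = zero_mor C W Y"
    using r comp_assoc[OF cat r(1) kernel_proj_hom[OF s] s] comp_kernel_proj[OF s]
      zero_mor_right[OF Y r(1)] by simp
qed

section \<open>End(X) is a Foulis semigroup\<close>

lemma End_foulis_semigroup:
  assumes X: "X \<in> Obj C"
  shows "foulis_semigroup (End C X) (Comp C) (Id C X) (Dag C) kernel_proj"
  unfolding foulis_semigroup_def End_def kernel_proj_id[OF X]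
proof (intro conjI ballI)
  show "Id C X \<in> Hom C X X" using id_hom[OF cat X] .
  show "Dag C (Id C X) = Id C X" using dag_id[OF dc X] .
  fix s assume s: "s \<in> Hom C X X"
  show "Dag C s \<in> Hom C X X" using dag_hom[OF dc s] .
  show "kernel_proj s \<in> Hom C X X" using kernel_proj_hom[OF s] .
  show "Comp C (Id C X) s = s" "Comp C s (Id C X) = s" using id_left[OF cat s] id_right[OF cat s] .
  show "Dag C (Dag C s) = s" using dag_dag[OF dc s] .
  show "Comp C (kernel_proj s) (kernel_proj s) = kernel_proj s" using kernel_proj_idem[OF s] .
  show "kernel_proj s = Dag C (kernel_proj s)" using kernel_proj_self_adjoint[OF s] by simp
  show "Comp C (zero_mor C X X) s = zero_mor C X X" "Comp C s (zero_mor C X X) = zero_mor C X X"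
    using zero_mor_right[OF X s] zero_mor_left[OF X s] .
  fix t assume t: "t \<in> Hom C X X"
  show "Comp C s t \<in> Hom C X X" using comp_hom[OF cat t s] .
  show "Dag C (Comp C s t) = Comp C (Dag C t) (Dag C s)" using dag_comp[OF dc t s] .
  show "Comp C s t = zero_mor C X X \<longleftrightarrow> (\<exists>y \<in> Hom C X X. t = Comp C (kernel_proj s) y)"
    using comp_zero_iff_kernel_proj[OF s t] .
  fix u assume u: "u \<in> Hom C X X"
  show "Comp C (Comp C s t) u = Comp C s (Comp C t u)" using comp_assoc[OF cat u t s] by simp
qed

end

theorem mainTheorem14:
  fixes C :: "('o, 'm) dcat" and ker :: "'m \<Rightarrow> 'm" and X :: 'o
  assumes "dagger_kernel_category C"
    and "\<forall>s \<in> Mor C. is_kernel C s (ker s) \<and> dagger_mono C (ker s)"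
    and "X \<in> Obj C"
  shows "foulis_semigroup (End C X) (Comp C) (Id C X) (Dag C)
           (\<lambda>s. Comp C (ker s) (Dag C (ker s)))
     \<and> (\<forall>s \<in> End C X. \<forall>t \<in> End C X.
          Comp C s t = zero_mor C X X \<longleftrightarrow>
          (\<exists>r \<in> End C X. t = Comp C (Comp C (ker s) (Dag C (ker s))) r))
     \<and> (\<forall>f \<in> Mor C. End_map C f \<in> End C (Dom C f) \<rightarrow>\<^sub>E End C (Cod C f))
     \<and> (\<forall>Y \<in> Obj C. End_map C (Id C Y) = (\<lambda>s \<in> End C Y. s))
     \<and> (\<forall>f \<in> Mor C. \<forall>g \<in> Mor C. Cod C f = Dom C g \<longrightarrow>
          End_map C (Comp C g f) = compose (End C (Dom C f)) (End_map C g) (End_map C f))"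
proof -
  interpret chosen_dagger_kernels C ker
    using assms(1,2) unfolding dagger_kernel_category_def by unfold_locales auto
  have foulis: "foulis_semigroup (End C X) (Comp C) (Id C X) (Dag C) kernel_proj"
    using End_foulis_semigroup[OF assms(3)] .
  have kernel_char: "\<forall>s \<in> End C X. \<forall>t \<in> End C X.
      Comp C s t = zero_mor C X X \<longleftrightarrow> (\<exists>r \<in> End C X. t = Comp C (kernel_proj s) r)"
    unfolding End_def using comp_zero_iff_kernel_proj by blast
  show ?thesis
    unfolding kernel_proj_def[symmetric] using foulis kernel_char
      End_map_funcset[OF dc] End_map_id[OF dc] End_map_comp[OF dc] by blast
qed

end
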